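(* For $\tau\in[0,\tfrac12]$, $$R(\tau)\le \frac12\left(1+\mathsf{h}\!\left(\tfrac12-\tau\right)-\left(\tfrac12+\tau\right)\mathsf{h}\!\left(\frac{2\tau}{\frac12+\tau}\right)\right),$$ where $\mathsf{h}(\xi)=-\xi\log_2\xi-(1-\xi)\log_2(1-\xi)$ is the binary entropy function.
   Context: A grain pattern of length $n$ is a subset $E\subseteq\{2,\dots,n\}$ containing no two consecutive integers. For such $E$, $\phi_E:\{0,1\}^n\to\{0,1\}^n$ sends $\mathbf{x}$ to $\mathbf{y}$ with $y_j=x_{j-1}$ if $j\in E$ and $y_j=x_j$ otherwise. $\Phi_t(\mathbf{x})=\{\phi_E(\mathbf{x}): E \text{ a grain pattern of length } n,\ |E|\le t\}$. A code $\mathcal{C}\subseteq\{0,1\}^n$ is $t$-grain-correcting if for any two distinct codewords $\mathbf{x}_1,\mathbf{x}_2$ one has $\Phi_t(\mathbf{x}_1)\cap\Phi_t(\mathbf{x}_2)=\emptyset$. $M(n,t)$ is the maximum cardinality of a $t$-grain-correcting code of length $n$, and $R(\tau)=\limsup_{n\to\infty}\frac1n\log_2 M(n,\lceil\tau n\rceil)$. *)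

theory Defs
  imports Complex_Main "HOL-Library.Extended_Real" "HOL-Library.Liminf_Limsup"
begin

(* Binary words of length n are lists of booleans of length n; position j (1-based,
   as in the paper) is the list entry xs ! (j - 1). *)
definition words :: "nat \<Rightarrow> bool list set" where
  "words n = {xs. length xs = n}"

definition grain_pattern :: "nat \<Rightarrow> nat set \<Rightarrow> bool" where
  "grain_pattern n E \<longleftrightarrow> E \<subseteq> {2..n} \<and> (\<forall>j\<in>E. Suc j \<notin> E)"

(* phi_E: y_j = x_{j-1} if j \<in> E, else y_j = x_j  (1-based j = 1..n) *)
definition phi :: "nat set \<Rightarrow> bool list \<Rightarrow> bool list" where
  "phi E xs = map (\<lambda>j. if j \<in> E then xs ! (j - 2) else xs ! (j - 1)) [1..<length xs + 1]"

definition Phi :: "nat \<Rightarrow> nat \<Rightarrow> bool list \<Rightarrow> bool list set" where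
  "Phi n t xs = {phi E xs | E. grain_pattern n E \<and> card E \<le> t}"

definition grain_correcting :: "nat \<Rightarrow> nat \<Rightarrow> bool list set \<Rightarrow> bool" where
  "grain_correcting n t C \<longleftrightarrow> C \<subseteq> words n \<and>
     (\<forall>x1\<in>C. \<forall>x2\<in>C. x1 \<noteq> x2 \<longrightarrow> Phi n t x1 \<inter> Phi n t x2 = {})"

definition M :: "nat \<Rightarrow> nat \<Rightarrow> nat" where
  "M n t = Max {card C | C. grain_correcting n t C}"

definition R :: "real \<Rightarrow> ereal" where
  "R \<tau> = limsup (\<lambda>n. ereal (log 2 (real (M n (nat \<lceil>\<tau> * real n\<rceil>))) / real n))"

definition h :: "real \<Rightarrow> real" where
  "h \<xi> = (if \<xi> = 0 \<or> \<xi> = 1 then 0 else - \<xi> * log 2 \<xi> - (1 - \<xi>) * log 2 (1 - \<xi>))"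

end

theory Submission
  imports Defs "HOL-Real_Asymp.Real_Asymp"
begin

text \<open>Split a word of length \<open>n\<close> into \<open>m = \<lfloor>n/2\<rfloor>\<close> pairs of bits; a grain at the second bit of a
  pair makes the pair constant. Counting the words obtained by making \<open>s = min a t\<close> of the \<open>a\<close> mixed
  (non-constant) pairs of a codeword constant shows that at most
  \<open>(m choose (a - s)) * 2^(n - m) / (a choose s)\<close> codewords have \<open>a\<close> mixed pairs. This ratio peaks at
  \<open>a \<approx> (m + t)/2\<close>, and entropy estimates for binomial coefficients turn the resulting bound on
  \<open>M n t\<close> into the stated rate.\<close>

definition mixed_pairs :: "nat \<Rightarrow> bool list \<Rightarrow> nat set" where
  "mixed_pairs m x = {i. i < m \<and> x ! (2*i) \<noteq> x ! (2*i+1)}"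

text \<open>The grain at (1-based) position \<open>2i+2\<close> overwrites bit \<open>2i+1\<close> (0-based) by bit \<open>2i\<close>,
  so it makes the \<open>i\<close>-th pair of bits constant.\<close>
definition pair_grains :: "nat set \<Rightarrow> nat set" where
  "pair_grains S = (\<lambda>i. 2*i + 2) ` S"

definition flatten_pairs :: "nat \<Rightarrow> bool list \<Rightarrow> bool list" where
  "flatten_pairs m x = phi (pair_grains (mixed_pairs m x)) x"

definition flat_words :: "nat \<Rightarrow> nat \<Rightarrow> bool list set" where
  "flat_words n m = {z \<in> words n. mixed_pairs m z = {}}"

lemma length_phi [simp]: "length (phi E x) = length x"
  unfolding phi_def length_map length_upt by simp

lemma nth_phi_pair_grains:
  assumes "j < length x"
  shows "phi (pair_grains S) x ! j = (if odd j \<and> j div 2 \<in> S then x ! (j - 1) else x ! j)"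
proof -
  have "Suc j \<in> pair_grains S \<longleftrightarrow> odd j \<and> j div 2 \<in> S"
    unfolding pair_grains_def by (auto elim!: oddE)
  then show ?thesis
    using assms unfolding phi_def by (simp add: nth_upt del: upt_Suc)
qed

lemma phi_pair_grains_even: "2*i < length x \<Longrightarrow> phi (pair_grains S) x ! (2*i) = x ! (2*i)"
  by (simp add: nth_phi_pair_grains)

lemma phi_pair_grains_odd:
  "Suc (2*i) < length x \<Longrightarrow>
    phi (pair_grains S) x ! Suc (2*i) = (if i \<in> S then x ! (2*i) else x ! Suc (2*i))"
  by (simp add: nth_phi_pair_grains)

lemma mixed_pairs_subset: "mixed_pairs m x \<subseteq> {..<m}"
  unfolding mixed_pairs_def by auto

lemma finite_mixed_pairs [simp]: "finite (mixed_pairs m x)"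
  using mixed_pairs_subset finite_subset by blast

lemma mixed_pairs_phi_pair_grains:
  "2*m \<le> length x \<Longrightarrow> mixed_pairs m (phi (pair_grains S) x) = mixed_pairs m x - S"
  unfolding mixed_pairs_def by (auto simp: phi_pair_grains_even phi_pair_grains_odd split: if_splits)

lemma length_flatten_pairs [simp]: "length (flatten_pairs m x) = length x"
  by (simp add: flatten_pairs_def)

lemma mixed_pairs_flatten_pairs: "2*m \<le> length x \<Longrightarrow> mixed_pairs m (flatten_pairs m x) = {}"
  by (simp add: flatten_pairs_def mixed_pairs_phi_pair_grains)

lemma grain_pattern_pair_grains: "S \<subseteq> {..<m} \<Longrightarrow> 2*m \<le> n \<Longrightarrow> grain_pattern n (pair_grains S)"
  unfolding grain_pattern_def pair_grains_def by auto presburger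

lemma card_pair_grains: "card (pair_grains S) = card S"
  unfolding pair_grains_def by (rule card_image) (auto simp: inj_on_def)

lemma inj_on_phi_pair_grains:
  assumes "2*m \<le> length x"
  shows "inj_on (\<lambda>S. phi (pair_grains S) x) (Pow (mixed_pairs m x))"
proof
  fix S S' assume S: "S \<in> Pow (mixed_pairs m x)" and S': "S' \<in> Pow (mixed_pairs m x)"
    and eq: "phi (pair_grains S) x = phi (pair_grains S') x"
  show "S = S'"
  proof (rule ccontr)
    assume "S \<noteq> S'"
    then obtain i where i: "i \<in> S \<longleftrightarrow> i \<notin> S'" by blast
    then have "i \<in> mixed_pairs m x" using S S' by blast
    then have "2*i + 1 < length x" "x ! (2*i) \<noteq> x ! (2*i+1)"
      using assms by (auto simp: mixed_pairs_def)
    moreover have "phi (pair_grains S) x ! (2*i+1) = phi (pair_grains S') x ! (2*i+1)"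
      using eq by simp
    ultimately show False using i by (simp add: phi_pair_grains_odd split: if_splits)
  qed
qed

lemma inj_on_mixed_pairs_flatten_pairs:
  assumes "2*m \<le> n"
  shows "inj_on (\<lambda>y. (mixed_pairs m y, flatten_pairs m y)) (words n)"
proof
  fix y y' assume y: "y \<in> words n" and y': "y' \<in> words n"
    and eq: "(mixed_pairs m y, flatten_pairs m y) = (mixed_pairs m y', flatten_pairs m y')"
  have len: "length y = n" "length y' = n" using y y' by (auto simp: words_def)
  have mixed: "mixed_pairs m y = mixed_pairs m y'"
    and flat: "\<And>j. flatten_pairs m y ! j = flatten_pairs m y' ! j" using eq by auto
  show "y = y'"
  proof (rule nth_equalityI)
    show "length y = length y'" using len by simp
    fix j assume j: "j < length y"
    show "y ! j = y' ! j"
    proof (cases "j div 2 < m")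
      case False
      then have "j div 2 \<notin> mixed_pairs m y" "j div 2 \<notin> mixed_pairs m y'"
        by (auto simp: mixed_pairs_def)
      then show ?thesis
        using flat[of j] j len by (simp add: flatten_pairs_def nth_phi_pair_grains)
    next
      case True
      define i where "i = j div 2"
      have even: "y ! (2*i) = y' ! (2*i)"
        using flat[of "2*i"] True assms len by (simp add: i_def flatten_pairs_def phi_pair_grains_even)
      have odd: "y ! (2*i+1) = y' ! (2*i+1)"
      proof (cases "i \<in> mixed_pairs m y")
        case True
        moreover have "i \<in> mixed_pairs m y'" using True mixed by simp
        ultimately show ?thesis using even unfolding mixed_pairs_def by auto
      next
        case False
        then show ?thesis
          using flat[of "2*i+1"] mixed \<open>j div 2 < m\<close> assms len
          by (simp add: i_def flatten_pairs_def phi_pair_grains_odd)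
      qed
      have "j = 2*i \<or> j = 2*i + 1" using i_def by auto
      then show ?thesis using even odd by auto
    qed
  qed
qed

lemma words_eq_lists: "words k = {xs. set xs \<subseteq> (UNIV :: bool set) \<and> length xs = k}"
  by (auto simp: words_def)

lemma card_words: "card (words k) = 2 ^ k"
  unfolding words_eq_lists using card_lists_length_eq[of "UNIV :: bool set" k] by simp

lemma finite_words [simp]: "finite (words k)"
  unfolding words_eq_lists using finite_lists_length_eq[of "UNIV :: bool set" k] by simp

text \<open>A flat word is determined by its even bits among the first \<open>2m\<close> and its last \<open>n - 2m\<close> bits.\<close>
lemma card_flat_words_le:
  assumes "2*m \<le> n"
  shows "card (flat_words n m) \<le> 2 ^ (n - m)"
proof -
  define g where "g z = map (\<lambda>i. z ! (2*i)) [0..<m] @ drop (2*m) z" for z :: "bool list"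
  have "inj_on g (flat_words n m)"
  proof
    fix z z' assume z: "z \<in> flat_words n m" and z': "z' \<in> flat_words n m" and eq: "g z = g z'"
    have len: "length z = n" "length z' = n" using z z' by (auto simp: flat_words_def words_def)
    show "z = z'"
    proof (rule nth_equalityI)
      show "length z = length z'" using len by simp
      fix j assume j: "j < length z"
      show "z ! j = z' ! j"
      proof (cases "j < 2*m")
        case True
        define i where "i = j div 2"
        have "i < m" using True i_def by simp
        then have even: "z ! (2*i) = z' ! (2*i)"
          using arg_cong[OF eq, of "\<lambda>l. l ! i"] by (simp add: g_def nth_append)
        have "i \<notin> mixed_pairs m z" "i \<notin> mixed_pairs m z'"
          using z z' by (auto simp: flat_words_def)
        then have odd: "z ! (2*i+1) = z' ! (2*i+1)"
          using even \<open>i < m\<close> by (auto simp: mixed_pairs_def)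
        have "j = 2*i \<or> j = 2*i + 1" using i_def by auto
        then show ?thesis using even odd by auto
      next
        case False
        have "g w ! (j - m) = w ! j" if "length w = n" for w
        proof -
          have "g w ! (j - m) = drop (2*m) w ! (j - m - m)"
            using False by (simp add: g_def nth_append)
          also have "\<dots> = w ! j" using False j len that by simp
          finally show ?thesis .
        qed
        then show ?thesis using len eq by metis
      qed
    qed
  qed
  moreover have "g ` flat_words n m \<subseteq> words (n - m)"
    using assms by (auto simp: g_def words_def flat_words_def)
  ultimately have "card (flat_words n m) \<le> card (words (n - m))"
    using card_inj_on_le finite_words by blast
  then show ?thesis by (simp add: card_words)
qed

text \<open>Making \<open>S \<subseteq> mixed_pairs m x\<close> constant uses \<open>|S| \<le> t\<close> grains, so the resulting word lies in the
  grain ball of the codeword \<open>x\<close>; it therefore determines \<open>x\<close>, and then \<open>S\<close>.\<close>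
lemma inj_on_flatten_grain_ball:
  assumes code: "grain_correcting n t C" and "2*m \<le> n"
  shows "inj_on (\<lambda>(x, S). (mixed_pairs m (phi (pair_grains S) x), flatten_pairs m (phi (pair_grains S) x)))
    (SIGMA x:C. {S. S \<subseteq> mixed_pairs m x \<and> card S \<le> t})"
proof (rule inj_onI, clarsimp)
  fix x S x' S'
  assume x: "x \<in> C" "S \<subseteq> mixed_pairs m x" "card S \<le> t"
    and x': "x' \<in> C" "S' \<subseteq> mixed_pairs m x'" "card S' \<le> t"
    and mixed: "mixed_pairs m (phi (pair_grains S) x) = mixed_pairs m (phi (pair_grains S') x')"
    and flat: "flatten_pairs m (phi (pair_grains S) x) = flatten_pairs m (phi (pair_grains S') x')"
  have "C \<subseteq> words n" using code by (simp add: grain_correcting_def)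
  then have len: "length x = n" "length x' = n" using x x' by (auto simp: words_def)
  have y_Phi: "phi (pair_grains T) z \<in> Phi n t z"
    if "T \<subseteq> mixed_pairs m z" "card T \<le> t" for T z
  proof -
    have "grain_pattern n (pair_grains T)"
      using grain_pattern_pair_grains[OF subset_trans[OF that(1) mixed_pairs_subset] \<open>2*m \<le> n\<close>] .
    then show ?thesis using that(2) unfolding Phi_def by (auto simp: card_pair_grains)
  qed
  have y: "phi (pair_grains S) x = phi (pair_grains S') x'"
    using inj_onD[OF inj_on_mixed_pairs_flatten_pairs[OF \<open>2*m \<le> n\<close>]] mixed flat len
    by (simp add: words_def)
  then have "phi (pair_grains S) x \<in> Phi n t x \<inter> Phi n t x'"
    using y_Phi[OF x(2,3)] y_Phi[OF x'(2,3)] by simp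
  then have "x = x'" using code x(1) x'(1) unfolding grain_correcting_def by blast
  moreover have "S = S'"
    using inj_onD[OF inj_on_phi_pair_grains[of m x]] y x x' \<open>x = x'\<close> len \<open>2*m \<le> n\<close> by simp
  ultimately show "x = x' \<and> S = S'" by simp
qed

lemma card_mixed_class_times_choose_le:
  assumes code: "grain_correcting n t C" and "2*m \<le> n" and "s \<le> t" and "s \<le> a"
  shows "card {x \<in> C. card (mixed_pairs m x) = a} * (a choose s) \<le> (m choose (a - s)) * 2 ^ (n - m)"
proof -
  define Ca where "Ca = {x \<in> C. card (mixed_pairs m x) = a}"
  define P where "P = (SIGMA x:Ca. {S. S \<subseteq> mixed_pairs m x \<and> card S = s})"
  define F where "F = (\<lambda>(x, S). (mixed_pairs m (phi (pair_grains S) x), flatten_pairs m (phi (pair_grains S) x)))"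
  define T where "T = {U. U \<subseteq> {..<m} \<and> card U = a - s} \<times> flat_words n m"
  have "C \<subseteq> words n" using code by (simp add: grain_correcting_def)
  then have len: "length x = n" if "x \<in> C" for x using that by (auto simp: words_def)
  have "finite C" using \<open>C \<subseteq> words n\<close> finite_words by (rule finite_subset)
  then have "finite Ca" by (simp add: Ca_def)
  then have "card P = (\<Sum>x\<in>Ca. card {S. S \<subseteq> mixed_pairs m x \<and> card S = s})"
    unfolding P_def by (simp add: card_SigmaI)
  also have "\<dots> = card Ca * (a choose s)"
    by (simp add: n_subsets Ca_def)
  finally have card_P: "card P = card Ca * (a choose s)" .
  have "inj_on F P"
    unfolding F_def by (rule inj_on_subset[OF inj_on_flatten_grain_ball[OF code \<open>2*m \<le> n\<close>]])
      (use \<open>s \<le> t\<close> in \<open>auto simp: P_def Ca_def\<close>)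
  moreover have "F ` P \<subseteq> T"
  proof
    fix p assume "p \<in> F ` P"
    then obtain x S where "(x, S) \<in> P" and p: "p = F (x, S)" by auto
    then have x: "x \<in> C" "card (mixed_pairs m x) = a" "S \<subseteq> mixed_pairs m x" "card S = s"
      by (auto simp: P_def Ca_def)
    have "2*m \<le> length x" using len[OF x(1)] \<open>2*m \<le> n\<close> by simp
    have "card (mixed_pairs m (phi (pair_grains S) x)) = a - s"
      using card_Diff_subset[OF finite_subset[OF x(3) finite_mixed_pairs] x(3)] x(2,4)
      by (simp add: mixed_pairs_phi_pair_grains[OF \<open>2*m \<le> length x\<close>])
    moreover have "flatten_pairs m (phi (pair_grains S) x) \<in> flat_words n m"
      using len[OF x(1)] mixed_pairs_flatten_pairs[of m "phi (pair_grains S) x"] \<open>2*m \<le> length x\<close>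
      by (simp add: flat_words_def words_def)
    ultimately show "p \<in> T" by (simp add: p F_def T_def mixed_pairs_subset)
  qed
  moreover have "finite T" by (simp add: T_def flat_words_def)
  ultimately have "card P \<le> card T" by (rule card_inj_on_le)
  also have "\<dots> \<le> (m choose (a - s)) * 2 ^ (n - m)"
    using card_flat_words_le[OF \<open>2*m \<le> n\<close>]
    by (simp add: T_def card_cartesian_product n_subsets[of "{..<m}", simplified])
  finally show ?thesis by (simp add: card_P Ca_def)
qed

lemma le_at_peak:
  fixes f :: "nat \<Rightarrow> 'a::order"
  assumes up: "\<And>j. l \<le> j \<Longrightarrow> j < p \<Longrightarrow> f j \<le> f (Suc j)"
    and down: "\<And>j. p \<le> j \<Longrightarrow> j < u \<Longrightarrow> f (Suc j) \<le> f j"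
    and "l \<le> k" and "k \<le> u"
  shows "f k \<le> f p"
proof (cases "k \<le> p")
  case True
  have "f k \<le> f j" if "k \<le> j" "j \<le> p" for j
    using that
  proof (induction j rule: dec_induct)
    case (step j)
    then have "f k \<le> f j" "f j \<le> f (Suc j)" using up \<open>l \<le> k\<close> by simp_all
    then show ?case by (rule order.trans)
  qed simp
  then show ?thesis using True by simp
next
  case False
  have "f j \<le> f p" if "p \<le> j" "j \<le> k" for j
    using that
  proof (induction j rule: dec_induct)
    case (step j)
    then have "f (Suc j) \<le> f j" "f j \<le> f p" using down \<open>k \<le> u\<close> by simp_all
    then show ?case by (rule order.trans)
  qed simp
  then show ?thesis using False by simp
qed

lemma choose_Suc_mult_Suc: "(m choose Suc k) * Suc k = (m choose k) * (m - k)"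
  using binomial_absorption[of k m] binomial_absorb_comp[of m k] by (simp add: mult.commute)

definition choose_ratio :: "nat \<Rightarrow> nat \<Rightarrow> nat \<Rightarrow> real" where
  "choose_ratio m t a = real (m choose (a - t)) / real (a choose t)"

lemma choose_ratio_Suc:
  assumes "t \<le> a" "a \<le> m"
  shows "choose_ratio m t (Suc a) * (real a + 1) = choose_ratio m t a * (real m + t - a)"
proof -
  have "real (m choose Suc (a - t)) * real (Suc (a - t)) = real (m choose (a - t)) * real (m - (a - t))"
    by (metis choose_Suc_mult_Suc of_nat_mult)
  moreover have "real (Suc (a - t)) = real a - t + 1" "real (m - (a - t)) = real m + t - a"
    using assms by (simp_all add: of_nat_diff)
  ultimately have num: "real (m choose Suc (a - t)) * (real a - t + 1) = real (m choose (a - t)) * (real m + t - a)"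
    by (simp add: algebra_simps)
  have "real (Suc a - t) * real (Suc a choose t) = real (Suc a) * real (a choose t)"
    by (metis binomial_absorb_comp diff_Suc_1 of_nat_mult)
  moreover have "real (Suc a - t) = real a - t + 1" using assms by (simp add: of_nat_diff)
  ultimately have den: "real (Suc a choose t) * (real a - t + 1) = (real a + 1) * real (a choose t)"
    by (simp add: algebra_simps)
  have "Suc a - t = Suc (a - t)" "real a - t + 1 \<noteq> 0" using assms by auto
  then have "choose_ratio m t (Suc a) = real (m choose (a - t)) * (real m + t - a) / ((real a + 1) * real (a choose t))"
    unfolding choose_ratio_def num[symmetric] den[symmetric] by simp
  then show ?thesis
    by (simp add: choose_ratio_def)
qed

text \<open>The ratio grows while \<open>a < (m + t)/2\<close> and decreases afterwards.\<close>
lemma choose_ratio_le_peak: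
  assumes "t \<le> a" "a \<le> m"
  shows "choose_ratio m t a \<le> choose_ratio m t ((m + t) div 2)"
proof (rule le_at_peak[where l = t and u = m])
  fix j assume j: "t \<le> j" "j < (m + t) div 2"
  have "choose_ratio m t j * (real j + 1) \<le> choose_ratio m t j * (real m + t - j)"
    using j by (intro mult_left_mono) (auto simp: choose_ratio_def)
  also have "\<dots> = choose_ratio m t (Suc j) * (real j + 1)"
    using choose_ratio_Suc[of t j m] j by simp
  finally show "choose_ratio m t j \<le> choose_ratio m t (Suc j)" by simp
next
  fix j assume j: "(m + t) div 2 \<le> j" "j < m"
  have "choose_ratio m t (Suc j) * (real j + 1) = choose_ratio m t j * (real m + t - j)"
    using choose_ratio_Suc[of t j m] j by simp
  also have "\<dots> \<le> choose_ratio m t j * (real j + 1)"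
    using j by (intro mult_left_mono) (auto simp: choose_ratio_def)
  finally show "choose_ratio m t (Suc j) \<le> choose_ratio m t j" by simp
qed (use assms in auto)

lemma card_mixed_class_le:
  assumes code: "grain_correcting n t C" and "2*m \<le> n" and "t \<le> m" and "a \<le> m"
  shows "real (card {x \<in> C. card (mixed_pairs m x) = a}) \<le> 2 ^ (n - m) * choose_ratio m t ((m + t) div 2)"
proof -
  define s where "s = min a t"
  have "real (card {x \<in> C. card (mixed_pairs m x) = a} * (a choose s)) \<le> real ((m choose (a - s)) * 2 ^ (n - m))"
    unfolding of_nat_le_iff
    by (rule card_mixed_class_times_choose_le[OF code \<open>2*m \<le> n\<close>]) (auto simp: s_def)
  moreover have "real (a choose s) > 0" by (simp add: s_def)
  ultimately have "real (card {x \<in> C. card (mixed_pairs m x) = a})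
      \<le> 2 ^ (n - m) * (real (m choose (a - s)) / real (a choose s))"
    by (simp add: field_simps)
  also have "real (m choose (a - s)) / real (a choose s) \<le> choose_ratio m t ((m + t) div 2)"
  proof (cases "t \<le> a")
    case True
    then show ?thesis
      using choose_ratio_le_peak[OF True \<open>a \<le> m\<close>] by (simp add: s_def choose_ratio_def)
  next
    case False
    then show ?thesis
      using choose_ratio_le_peak[of t t m] \<open>t \<le> m\<close> by (simp add: s_def choose_ratio_def)
  qed
  finally show ?thesis by simp
qed

lemma card_grain_correcting_le:
  assumes code: "grain_correcting n t C" and "2*m \<le> n" and "t \<le> m"
  shows "real (card C) \<le> (real m + 1) * 2 ^ (n - m) * choose_ratio m t ((m + t) div 2)"
proof -
  define Ca where "Ca a = {x \<in> C. card (mixed_pairs m x) = a}" for a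
  have "C \<subseteq> (\<Union>a\<in>{..m}. Ca a)"
    using card_mono[OF finite_lessThan mixed_pairs_subset] by (auto simp: Ca_def)
  moreover have "finite (\<Union>a\<in>{..m}. Ca a)"
    using code finite_subset[OF _ finite_words] by (auto simp: grain_correcting_def Ca_def)
  ultimately have "card C \<le> card (\<Union>a\<in>{..m}. Ca a)"
    by (rule card_mono[rotated])
  also have "\<dots> \<le> (\<Sum>a\<in>{..m}. card (Ca a))"
    by (rule card_UN_le) simp
  finally have "real (card C) \<le> (\<Sum>a\<in>{..m}. real (card (Ca a)))"
    by (metis of_nat_le_iff of_nat_sum)
  also have "\<dots> \<le> (\<Sum>a\<in>{..m}. 2 ^ (n - m) * choose_ratio m t ((m + t) div 2))"
    by (rule sum_mono) (use card_mixed_class_le[OF code \<open>2*m \<le> n\<close> \<open>t \<le> m\<close>] in \<open>simp add: Ca_def\<close>)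
  finally show ?thesis by (simp add: algebra_simps)
qed

lemma grain_correcting_mono: "grain_correcting n t C \<Longrightarrow> t' \<le> t \<Longrightarrow> grain_correcting n t' C"
  unfolding grain_correcting_def Phi_def by fastforce

lemma grain_correcting_singleton: "grain_correcting n t {replicate n False}"
  by (simp add: grain_correcting_def words_def)

lemma finite_code_sizes: "finite {card C | C. grain_correcting n t C}"
proof -
  have "{card C | C. grain_correcting n t C} \<subseteq> card ` Pow (words n)"
    by (auto simp: grain_correcting_def)
  then show ?thesis
    by (meson finite_Pow_iff finite_imageI finite_subset finite_words)
qed

lemma M_attained: "\<exists>C. grain_correcting n t C \<and> M n t = card C"
proof -
  have "{card C | C. grain_correcting n t C} \<noteq> {}"
    using grain_correcting_singleton by blast
  then show ?thesis
    using Max_in[OF finite_code_sizes] unfolding M_def by fastforce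
qed

lemma M_ge_one: "1 \<le> M n t"
proof -
  have "card {replicate n False} \<in> {card C | C. grain_correcting n t C}"
    using grain_correcting_singleton by blast
  then show ?thesis
    unfolding M_def using Max_ge[OF finite_code_sizes] by fastforce
qed

lemma h_eq: "x \<in> {0..1} \<Longrightarrow> h x = - x * log 2 x - (1 - x) * log 2 (1 - x)"
  by (auto simp: h_def)

lemma h_0 [simp]: "h 0 = 0" and h_1 [simp]: "h 1 = 0"
  by (simp_all add: h_def)

lemma binomial_term_le_one:
  fixes p :: real
  assumes "0 \<le> p" "p \<le> 1" "k \<le> m"
  shows "real (m choose k) * p ^ k * (1 - p) ^ (m - k) \<le> 1"
proof -
  have "real (m choose k) * p ^ k * (1 - p) ^ (m - k) \<le> (\<Sum>i\<le>m. real (m choose i) * p ^ i * (1 - p) ^ (m - i))"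
    by (rule member_le_sum) (use assms in auto)
  also have "\<dots> = (p + (1 - p)) ^ m" by (rule binomial_ring[symmetric])
  finally show ?thesis by simp
qed

lemma log_binomial_weight:
  assumes "0 < k" "k < m"
  defines "p \<equiv> real k / real m"
  shows "log 2 (p ^ k * (1 - p) ^ (m - k)) = - real m * h p"
proof -
  have "0 < p" "p < 1" using assms by (auto simp: p_def)
  moreover have "real k = real m * p" "real (m - k) = real m * (1 - p)"
    using assms by (auto simp: p_def field_simps of_nat_diff)
  ultimately show ?thesis
    by (simp add: log_mult log_nat_power h_def algebra_simps)
qed

lemma log_choose_le_entropy:
  assumes "k \<le> m"
  shows "log 2 (real (m choose k)) \<le> real m * h (real k / real m)"
proof (cases "0 < k \<and> k < m")
  case False
  then have "k = 0 \<or> k = m" using assms by auto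
  then show ?thesis by (cases "m = 0") auto
next
  case True
  define p where "p = real k / real m"
  have "0 < p" "p < 1" using True by (auto simp: p_def)
  then have "real (m choose k) * (p ^ k * (1 - p) ^ (m - k)) \<le> 1"
    using binomial_term_le_one[of p k m] assms by (simp add: mult.assoc)
  moreover have "0 < real (m choose k) * (p ^ k * (1 - p) ^ (m - k))"
    using \<open>0 < p\<close> \<open>p < 1\<close> assms by simp
  ultimately have "log 2 (real (m choose k) * (p ^ k * (1 - p) ^ (m - k))) \<le> 0"
    by (subst log_le_zero_cancel_iff) auto
  then have "log 2 (real (m choose k)) + log 2 (p ^ k * (1 - p) ^ (m - k)) \<le> 0"
    using \<open>0 < p\<close> \<open>p < 1\<close> assms by (simp add: log_mult)
  then show ?thesis using log_binomial_weight[of k m] True by (simp add: p_def)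
qed

lemma binomial_term_Suc:
  fixes p :: real
  assumes "j < a"
  shows "real (a choose Suc j) * p ^ Suc j * (1 - p) ^ (a - Suc j) * ((real j + 1) * (1 - p))
    = real (a choose j) * p ^ j * (1 - p) ^ (a - j) * ((real a - j) * p)"
proof -
  have choose: "real (a choose Suc j) * (real j + 1) = real (a choose j) * (real a - j)"
    using arg_cong[OF choose_Suc_mult_Suc[of a j], of real] assms by (simp add: of_nat_diff algebra_simps)
  have power: "(1 - p) ^ (a - j) = (1 - p) ^ (a - Suc j) * (1 - p)"
    using assms by (metis Suc_diff_Suc power_Suc2)
  show ?thesis
    by (simp add: power mult_ac flip: choose)
qed

lemma binomial_term_le_mode:
  assumes "0 < t" "t < a" "k \<le> a"
  defines "p \<equiv> real t / real a"
  shows "real (a choose k) * p ^ k * (1 - p) ^ (a - k) \<le> real (a choose t) * p ^ t * (1 - p) ^ (a - t)"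
proof -
  define T where "T k = real (a choose k) * p ^ k * (1 - p) ^ (a - k)" for k
  have p: "0 < p" "p < 1" "real a * p = t" "real a * (1 - p) = real a - t"
    using assms by (auto simp: p_def field_simps)
  have ratio: "T (Suc j) * ((real j + 1) * (real a - t)) = T j * ((real a - j) * t)" if "j < a" for j
  proof -
    have "T (Suc j) * ((real j + 1) * (real a - t)) = real a * (T (Suc j) * ((real j + 1) * (1 - p)))"
      by (simp add: algebra_simps flip: p(3))
    also have "\<dots> = real a * (T j * ((real a - j) * p))"
      unfolding T_def binomial_term_Suc[OF that] ..
    also have "\<dots> = T j * ((real a - j) * t)"
      by (simp add: algebra_simps flip: p(3))
    finally show ?thesis .
  qed
  have "0 \<le> T j" for j using p by (simp add: T_def)
  have "T k \<le> T t"
  proof (rule le_at_peak[where l = 0 and u = a])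
    fix j assume "j < t"
    have "T j * ((real j + 1) * (real a - t)) \<le> T j * ((real a - j) * t)"
    proof (rule mult_left_mono)
      have "(real a - j) * t - (real j + 1) * (real a - t) = real a * (real t - j - 1) + t"
        by (simp add: algebra_simps)
      moreover have "0 \<le> real a * (real t - j - 1)" using \<open>j < t\<close> by simp
      ultimately show "(real j + 1) * (real a - t) \<le> (real a - j) * t" by linarith
    qed fact
    also have "\<dots> = T (Suc j) * ((real j + 1) * (real a - t))"
      by (rule ratio[symmetric]) (use \<open>j < t\<close> \<open>t < a\<close> in simp)
    finally show "T j \<le> T (Suc j)"
      by (rule mult_right_le_imp_le) (use \<open>t < a\<close> in simp)
  next
    fix j assume "t \<le> j" "j < a"
    have "T (Suc j) * ((real j + 1) * (real a - t)) = T j * ((real a - j) * t)"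
      by (rule ratio) fact
    also have "\<dots> \<le> T j * ((real j + 1) * (real a - t))"
    proof (rule mult_left_mono)
      have "(real j + 1) * (real a - t) - (real a - j) * t = real a * (real j - t) + (real a - t)"
        by (simp add: algebra_simps)
      moreover have "0 \<le> real a * (real j - t)" using \<open>t \<le> j\<close> by simp
      ultimately show "(real a - j) * t \<le> (real j + 1) * (real a - t)" using \<open>t < a\<close> by linarith
    qed fact
    finally show "T (Suc j) \<le> T j"
      by (rule mult_right_le_imp_le) (use \<open>t < a\<close> in simp)
  qed (use assms in auto)
  then show ?thesis by (simp add: T_def)
qed

text \<open>Since the \<open>a + 1\<close> terms of the binomial expansion of \<open>(p + (1 - p))^a\<close> sum to \<open>1\<close>,
  the largest one, at the mode, is at least \<open>1/(a + 1)\<close>.\<close>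
lemma entropy_le_log_choose:
  assumes "t \<le> a"
  shows "real a * h (real t / real a) - log 2 (real a + 1) \<le> log 2 (real (a choose t))"
proof (cases "0 < t \<and> t < a")
  case False
  then have "t = 0 \<or> t = a" using assms by auto
  then show ?thesis by (cases "a = 0") auto
next
  case True
  define p where "p = real t / real a"
  define T where "T k = real (a choose k) * p ^ k * (1 - p) ^ (a - k)" for k
  have p: "0 < p" "p < 1" using True by (auto simp: p_def)
  have "1 = (\<Sum>k\<le>a. T k)"
    using binomial_ring[of p "1 - p" a] by (simp add: T_def)
  also have "\<dots> \<le> (\<Sum>k\<le>a. T t)"
    by (rule sum_mono) (use binomial_term_le_mode[of t a] True in \<open>simp add: T_def p_def\<close>)
  finally have "1 / (real a + 1) \<le> T t" by (simp add: field_simps)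
  then have "log 2 (1 / (real a + 1)) \<le> log 2 (T t)"
    by (intro log_mono) simp_all
  moreover have "log 2 (T t) = log 2 (real (a choose t)) + log 2 (p ^ t * (1 - p) ^ (a - t))"
    unfolding T_def using p True by (simp add: log_mult mult.assoc)
  ultimately show ?thesis
    using log_binomial_weight[of t a] True by (simp add: p_def log_divide)
qed

lemma continuous_on_h: "continuous_on {0..1} h"
proof -
  have "continuous_on {0..1} (\<lambda>x::real. - x * log 2 x - (1 - x) * log 2 (1 - x))"
  proof (rule continuous_on_IccI)
    show "((\<lambda>x::real. - x * log 2 x - (1 - x) * log 2 (1 - x)) \<longlongrightarrow> - 0 * log 2 0 - (1 - 0) * log 2 (1 - 0)) (at_right 0)"
      by simp real_asymp
    show "((\<lambda>x::real. - x * log 2 x - (1 - x) * log 2 (1 - x)) \<longlongrightarrow> - 1 * log 2 1 - (1 - 1) * log 2 (1 - 1)) (at_left 1)"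
      by simp real_asymp
    fix x :: real assume "0 < x" "x < 1"
    then show "(\<lambda>x::real. - x * log 2 x - (1 - x) * log 2 (1 - x)) \<midarrow>x\<rightarrow> - x * log 2 x - (1 - x) * log 2 (1 - x)"
      by (intro tendsto_intros) auto
  qed simp
  then show ?thesis by (rule continuous_on_cong[THEN iffD1, rotated 2]) (auto simp: h_eq)
qed

lemma tendsto_half_ratio:
  assumes "(\<lambda>n. real (f n) / real n) \<longlonglongrightarrow> c"
  shows "(\<lambda>n. real (f n div 2) / real n) \<longlonglongrightarrow> c / 2"
proof (rule tendsto_sandwich)
  show "\<forall>\<^sub>F n in sequentially. (real (f n) / real n) / 2 - 1 / real n \<le> real (f n div 2) / real n"
    using eventually_gt_at_top[of 0]
  proof eventually_elim
    fix n :: nat assume "0 < n"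
    have "real (f n) / 2 - 1 \<le> real (f n div 2)" by linarith
    then have "(real (f n) / 2 - 1) / real n \<le> real (f n div 2) / real n"
      by (rule divide_right_mono) simp
    then show "(real (f n) / real n) / 2 - 1 / real n \<le> real (f n div 2) / real n"
      by (simp add: diff_divide_distrib)
  qed
  show "\<forall>\<^sub>F n in sequentially. real (f n div 2) / real n \<le> (real (f n) / real n) / 2"
  proof (rule always_eventually, rule allI)
    fix n
    have "2 * real (f n div 2) \<le> real (f n)" by linarith
    then show "real (f n div 2) / real n \<le> (real (f n) / real n) / 2"
      by (cases "n = 0") (simp_all add: field_simps)
  qed
  show "(\<lambda>n. (real (f n) / real n) / 2) \<longlonglongrightarrow> c / 2"
    using assms by (intro tendsto_divide tendsto_const) simp_all
  then have "(\<lambda>n. (real (f n) / real n) / 2 - 1 / real n) \<longlonglongrightarrow> c / 2 - 0"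
    using lim_inverse_n' by (rule tendsto_diff)
  then show "(\<lambda>n. (real (f n) / real n) / 2 - 1 / real n) \<longlonglongrightarrow> c / 2"
    by simp
qed

lemma tendsto_div2_ratio: "(\<lambda>n. real (n div 2) / real n) \<longlonglongrightarrow> 1/2"
proof -
  have "\<forall>\<^sub>F n in sequentially. 1 = real n / real n"
    using eventually_gt_at_top[of 0] by eventually_elim simp
  then have "(\<lambda>n. real n / real n) \<longlonglongrightarrow> 1" by (rule Lim_transform_eventually[OF tendsto_const])
  then show ?thesis using tendsto_half_ratio[of "\<lambda>n. n"] by simp
qed

lemma tendsto_quotient_of_ratios:
  fixes x y :: "nat \<Rightarrow> real"
  assumes "(\<lambda>n. x n / real n) \<longlonglongrightarrow> c" and "(\<lambda>n. y n / real n) \<longlonglongrightarrow> d" and "d \<noteq> 0"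
  shows "(\<lambda>n. x n / y n) \<longlonglongrightarrow> c / d"
proof -
  have "(\<lambda>n. (x n / real n) / (y n / real n)) \<longlonglongrightarrow> c / d"
    using assms by (rule tendsto_divide)
  moreover have "\<forall>\<^sub>F n in sequentially. (x n / real n) / (y n / real n) = x n / y n"
    using eventually_gt_at_top[of 0] by eventually_elim simp
  ultimately show ?thesis by (rule Lim_transform_eventually)
qed

lemma tendsto_h_ratio:
  assumes lim: "(\<lambda>n. real (x n) / real (y n)) \<longlonglongrightarrow> r" and "\<And>n. x n \<le> y n"
  shows "(\<lambda>n. h (real (x n) / real (y n))) \<longlonglongrightarrow> h r"
proof (rule continuous_on_tendsto_compose[OF continuous_on_h lim])
  have "real (x n) / real (y n) \<in> {0..1}" for n
    using assms(2)[of n] by (cases "y n = 0") auto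
  then show "\<forall>\<^sub>F n in sequentially. real (x n) / real (y n) \<in> {0..1}" by simp
  then show "r \<in> {0..1}"
    using tendsto_lowerbound[OF lim] tendsto_upperbound[OF lim] by auto
qed

lemma tendsto_ceiling_ratio:
  assumes "0 \<le> \<tau>"
  shows "(\<lambda>n. real (nat \<lceil>\<tau> * real n\<rceil>) / real n) \<longlonglongrightarrow> \<tau>"
proof (rule tendsto_sandwich)
  show "\<forall>\<^sub>F n in sequentially. \<tau> \<le> real (nat \<lceil>\<tau> * real n\<rceil>) / real n"
    using eventually_gt_at_top[of 0]
  proof eventually_elim
    fix n :: nat assume "0 < n"
    have "\<tau> * real n \<le> real (nat \<lceil>\<tau> * real n\<rceil>)" by linarith
    then show "\<tau> \<le> real (nat \<lceil>\<tau> * real n\<rceil>) / real n" using \<open>0 < n\<close> by (simp add: field_simps)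
  qed
  show "\<forall>\<^sub>F n in sequentially. real (nat \<lceil>\<tau> * real n\<rceil>) / real n \<le> \<tau> + 1 / real n"
    using eventually_gt_at_top[of 0]
  proof eventually_elim
    fix n :: nat assume "0 < n"
    have "real (nat \<lceil>\<tau> * real n\<rceil>) \<le> \<tau> * real n + 1"
      using assms by (simp add: of_nat_nat)
    then show "real (nat \<lceil>\<tau> * real n\<rceil>) / real n \<le> \<tau> + 1 / real n"
      using \<open>0 < n\<close> by (simp add: field_simps)
  qed
  show "(\<lambda>n. \<tau>) \<longlonglongrightarrow> \<tau>" by simp
  show "(\<lambda>n. \<tau> + 1 / real n) \<longlonglongrightarrow> \<tau>" by real_asymp
qed

lemma tendsto_log_Suc_ratio:
  assumes "\<And>n. y n \<le> n"
  shows "(\<lambda>n. log 2 (real (y n) + 1) / real n) \<longlonglongrightarrow> 0"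
proof (rule tendsto_sandwich)
  show "\<forall>\<^sub>F n in sequentially. 0 \<le> log 2 (real (y n) + 1) / real n" by simp
  show "\<forall>\<^sub>F n in sequentially. log 2 (real (y n) + 1) / real n \<le> log 2 (real n + 1) / real n"
    by (rule always_eventually) (use assms in \<open>auto intro!: divide_right_mono\<close>)
  show "(\<lambda>n. 0::real) \<longlonglongrightarrow> 0" by simp
  show "(\<lambda>n. log 2 (real n + 1) / real n) \<longlonglongrightarrow> 0" by real_asymp
qed

text \<open>The bound on \<open>log\<^sub>2 M(n, t) / n\<close> obtained with \<open>m = \<lfloor>n/2\<rfloor>\<close> pairs, \<open>t' = min t m\<close> grains and
  the peak \<open>a = \<lfloor>(m + t')/2\<rfloor>\<close> of the ratio of binomial coefficients.\<close>
definition grain_rate_bound :: "nat \<Rightarrow> nat \<Rightarrow> real" where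
  "grain_rate_bound n t =
    (let m = n div 2; t' = min t m; a = (m + t') div 2
     in (log 2 (real m + 1) + (real n - real m) + real m * h (real (a - t') / real m)
         - real a * h (real t' / real a) + log 2 (real a + 1)) / real n)"

lemma log_M_le_grain_rate_bound:
  assumes "0 < n"
  shows "log 2 (real (M n t)) / real n \<le> grain_rate_bound n t"
proof -
  define m where "m = n div 2"
  define t' where "t' = min t m"
  define a where "a = (m + t') div 2"
  have "t' \<le> a" "a \<le> m" "a - t' \<le> m" "t' \<le> m" "m \<le> n" by (auto simp: t'_def a_def m_def)
  then have "0 < real (m choose (a - t'))" "0 < real (a choose t')" by simp_all
  obtain C where C: "grain_correcting n t C" "M n t = card C" using M_attained by blast
  have "grain_correcting n t' C" using grain_correcting_mono[OF C(1)] by (simp add: t'_def)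
  then have "real (M n t) \<le> (real m + 1) * 2 ^ (n - m) * (real (m choose (a - t')) / real (a choose t'))"
    using card_grain_correcting_le[of n t' C m] C(2) \<open>t' \<le> m\<close>
    by (simp add: m_def a_def choose_ratio_def)
  then have "log 2 (real (M n t)) \<le> log 2 ((real m + 1) * 2 ^ (n - m) * (real (m choose (a - t')) / real (a choose t')))"
    using M_ge_one[of n t] by (intro log_mono) simp_all
  also have "\<dots> = log 2 (real m + 1) + (real n - real m) + log 2 (real (m choose (a - t'))) - log 2 (real (a choose t'))"
    using \<open>m \<le> n\<close> \<open>0 < real (m choose (a - t'))\<close> \<open>0 < real (a choose t')\<close>
    by (simp add: log_mult log_divide log_nat_power of_nat_diff)
  also have "\<dots> \<le> grain_rate_bound n t * real n"
  proof -
    have "grain_rate_bound n t * real n = log 2 (real m + 1) + (real n - real m)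
        + real m * h (real (a - t') / real m) - real a * h (real t' / real a) + log 2 (real a + 1)"
      using assms by (simp add: grain_rate_bound_def Let_def m_def t'_def a_def)
    then show ?thesis
      using log_choose_le_entropy[OF \<open>a - t' \<le> m\<close>] entropy_le_log_choose[OF \<open>t' \<le> a\<close>] by linarith
  qed
  finally show ?thesis using assms by (simp add: field_simps)
qed

lemma tendsto_grain_rate_bound:
  assumes t: "(\<lambda>n. real (t n) / real n) \<longlonglongrightarrow> \<tau>" and "0 \<le> \<tau>" "\<tau> \<le> 1/2"
  shows "(\<lambda>n. grain_rate_bound n (t n))
    \<longlonglongrightarrow> (1/2) * (1 + h (1/2 - \<tau>) - (1/2 + \<tau>) * h ((2 * \<tau>) / (1/2 + \<tau>)))"
proof -
  define m where "m n = n div 2" for n :: nat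
  define t' where "t' n = min (t n) (m n)" for n
  define a where "a n = (m n + t' n) div 2" for n
  have "t' n \<le> a n" "a n \<le> m n" "a n - t' n \<le> m n" "m n \<le> n" for n
    by (auto simp: t'_def a_def m_def)
  have lim_m: "(\<lambda>n. real (m n) / real n) \<longlonglongrightarrow> 1/2"
    unfolding m_def by (rule tendsto_div2_ratio)
  have "(\<lambda>n. real (t' n) / real n) = (\<lambda>n. min (real (t n) / real n) (real (m n) / real n))"
    by (simp add: t'_def of_nat_min min_divide_distrib_right)
  then have lim_t': "(\<lambda>n. real (t' n) / real n) \<longlonglongrightarrow> \<tau>"
    using tendsto_min[OF t lim_m] \<open>\<tau> \<le> 1/2\<close> by (simp add: min_absorb1)
  have lim_a: "(\<lambda>n. real (a n) / real n) \<longlonglongrightarrow> (1/2 + \<tau>) / 2"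
    unfolding a_def by (rule tendsto_half_ratio) (use tendsto_add[OF lim_m lim_t'] in \<open>simp add: add_divide_distrib\<close>)
  have lim_b: "(\<lambda>n. real (a n - t' n) / real n) \<longlonglongrightarrow> (1/2 + \<tau>) / 2 - \<tau>"
    using tendsto_diff[OF lim_a lim_t'] \<open>\<And>n. t' n \<le> a n\<close> by (simp add: of_nat_diff diff_divide_distrib)
  have "(\<lambda>n. h (real (a n - t' n) / real (m n))) \<longlonglongrightarrow> h (1/2 - \<tau>)"
    by (intro tendsto_h_ratio tendsto_eq_rhs[OF tendsto_quotient_of_ratios[OF lim_b lim_m]])
      (simp_all add: \<open>\<And>n. a n - t' n \<le> m n\<close>)
  moreover have "(\<lambda>n. h (real (t' n) / real (a n))) \<longlonglongrightarrow> h ((2 * \<tau>) / (1/2 + \<tau>))"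
    by (intro tendsto_h_ratio tendsto_eq_rhs[OF tendsto_quotient_of_ratios[OF lim_t' lim_a]])
      (use \<open>0 \<le> \<tau>\<close> \<open>\<And>n. t' n \<le> a n\<close> in simp_all)
  ultimately have "(\<lambda>n. log 2 (real (m n) + 1) / real n + (1 - real (m n) / real n)
      + real (m n) / real n * h (real (a n - t' n) / real (m n))
      - real (a n) / real n * h (real (t' n) / real (a n)) + log 2 (real (a n) + 1) / real n)
    \<longlonglongrightarrow> 0 + (1 - 1/2) + 1/2 * h (1/2 - \<tau>) - (1/2 + \<tau>) / 2 * h ((2 * \<tau>) / (1/2 + \<tau>)) + 0"
    by (intro tendsto_intros lim_m lim_a tendsto_log_Suc_ratio)
      (use \<open>\<And>n. a n \<le> m n\<close> \<open>\<And>n. m n \<le> n\<close> in \<open>auto intro: order_trans\<close>)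
  moreover have "\<forall>\<^sub>F n in sequentially.
      log 2 (real (m n) + 1) / real n + (1 - real (m n) / real n)
      + real (m n) / real n * h (real (a n - t' n) / real (m n))
      - real (a n) / real n * h (real (t' n) / real (a n)) + log 2 (real (a n) + 1) / real n
    = grain_rate_bound n (t n)"
    using eventually_gt_at_top[of 0]
    by eventually_elim (simp add: grain_rate_bound_def Let_def m_def t'_def a_def field_simps)
  ultimately have "(\<lambda>n. grain_rate_bound n (t n))
    \<longlonglongrightarrow> 0 + (1 - 1/2) + 1/2 * h (1/2 - \<tau>) - (1/2 + \<tau>) / 2 * h ((2 * \<tau>) / (1/2 + \<tau>)) + 0"
    by (rule Lim_transform_eventually)
  then show ?thesis by (rule tendsto_eq_rhs) (simp add: field_simps)
qed

theorem theorem5p1: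
  fixes \<tau> :: real
  assumes "0 \<le> \<tau>" and "\<tau> \<le> 1/2"
  shows "R \<tau> \<le> ereal ((1/2) * (1 + h (1/2 - \<tau>) - (1/2 + \<tau>) * h ((2 * \<tau>) / (1/2 + \<tau>))))"
proof -
  let ?t = "\<lambda>n. nat \<lceil>\<tau> * real n\<rceil>"
  have "\<forall>\<^sub>F n in sequentially.
      ereal (log 2 (real (M n (?t n))) / real n) \<le> ereal (grain_rate_bound n (?t n))"
    using eventually_gt_at_top[of 0] by eventually_elim (simp add: log_M_le_grain_rate_bound)
  then have "R \<tau> \<le> limsup (\<lambda>n. ereal (grain_rate_bound n (?t n)))"
    unfolding R_def by (rule Limsup_mono)
  also have "\<dots> = ereal ((1/2) * (1 + h (1/2 - \<tau>) - (1/2 + \<tau>) * h ((2 * \<tau>) / (1/2 + \<tau>))))"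
    using tendsto_grain_rate_bound[OF tendsto_ceiling_ratio[OF assms(1)] assms]
    by (intro lim_imp_Limsup) simp_all
  finally show ?thesis .
qed

end
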